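(* For every positive integer $n$, the poset $\widetilde\Pi(\mathbb{Z}_n)$ is isomorphic (as a poset, hence as a lattice) to the subgroup lattice $\mathcal{L}(\mathbb{Z}_n)$; in particular, $\widetilde\Pi(\mathbb{Z}_n)$ is a lattice.
   Context: For a finite group $G$ and a subgroup $H\le G$, let $\pi_e(H)=\{o(x)\mid x\in H\}$. Let $\mathcal{L}(G)$ be the lattice of subgroups of $G$ ordered by inclusion; define $H_1\equiv H_2$ iff $\pi_e(H_1)=\pi_e(H_2)$, with class $[H]$. The poset $\widetilde\Pi(G)$ is $\mathcal{L}(G)/\!\equiv$ ordered by $[H_1]\lesssim[H_2]$ iff $\pi_e(H_1)\subseteq\pi_e(H_2)$. $\mathbb{Z}_n$ is the cyclic group of order $n$. *)

theory Defs
  imports "HOL-Algebra.Algebra"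
begin

text \<open>pi_e(H): the set of element orders of H (orders taken in G; for a subgroup
  these coincide with the orders in H).\<close>
definition pi_e :: "('a, 'b) monoid_scheme \<Rightarrow> 'a set \<Rightarrow> nat set" where
  "pi_e G H = {group.ord G x | x. x \<in> H}"

definition spec_class :: "('a, 'b) monoid_scheme \<Rightarrow> 'a set \<Rightarrow> 'a set set" where
  "spec_class G H = {K. subgroup K G \<and> pi_e G K = pi_e G H}"

definition Pi_tilde :: "('a, 'b) monoid_scheme \<Rightarrow> 'a set set gorder" where
  "Pi_tilde G = \<lparr> carrier = {spec_class G H | H. subgroup H G},
                  eq = (=),
                  le = (\<lambda>A B. \<exists>H K. subgroup H G \<and> subgroup K G \<and>
                          A = spec_class G H \<and> B = spec_class G K \<and>
                          pi_e G H \<subseteq> pi_e G K) \<rparr>"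

definition subgroup_lattice :: "('a, 'b) monoid_scheme \<Rightarrow> 'a set gorder" where
  "subgroup_lattice G = \<lparr> carrier = {H. subgroup H G}, eq = (=), le = (\<subseteq>) \<rparr>"

definition poset_iso :: "('a, 'c) gorder_scheme \<Rightarrow> ('b, 'd) gorder_scheme \<Rightarrow> bool" where
  "poset_iso A B \<longleftrightarrow> (\<exists>f. bij_betw f (carrier A) (carrier B) \<and>
      (\<forall>x\<in>carrier A. \<forall>y\<in>carrier A. x \<sqsubseteq>\<^bsub>A\<^esub> y \<longleftrightarrow> f x \<sqsubseteq>\<^bsub>B\<^esub> f y))"

end

theory Submission
  imports Defs
begin

text \<open>In a finite cyclic group all elements of a given order d generate the same subgroup
  (the unique subgroup of order d), so a subgroup containing one element of order d contains
  all of them. Hence \<open>pi_e G H \<subseteq> pi_e G K\<close> holds exactly when \<open>H \<subseteq> K\<close>: every class [H]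
  is the singleton {H}, \<open>[H] \<mapsto> H\<close> is an order isomorphism onto the subgroup lattice, and
  the lattice structure of the subgroup lattice transfers along it.\<close>

lemma least_Upper_order_iso:
  fixes M :: "('a, 'c) gorder_scheme" and L :: "('b, 'd) gorder_scheme"
  assumes f: "bij_betw f (carrier M) (carrier L)"
    and le: "\<forall>x\<in>carrier M. \<forall>y\<in>carrier M. x \<sqsubseteq>\<^bsub>M\<^esub> y \<longleftrightarrow> f x \<sqsubseteq>\<^bsub>L\<^esub> f y"
    and A: "A \<subseteq> carrier M" and t: "least L t (Upper L (f ` A))"
  shows "least M (inv_into (carrier M) f t) (Upper M A)"
proof -
  let ?s = "inv_into (carrier M) f t"
  have "t \<in> carrier L"
    using t by (rule least_closed)
  then have s: "?s \<in> carrier M" "f ?s = t"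
    using f by (auto simp: bij_betw_def inv_into_into f_inv_into_f)
  have fM: "f z \<in> carrier L" if "z \<in> carrier M" for z
    using f that by (auto simp: bij_betw_def)
  have "?s \<in> Upper M A"
    using least_mem[OF t] s A le fM by (auto simp: Upper_def)
  moreover have "?s \<sqsubseteq>\<^bsub>M\<^esub> z" if z: "z \<in> Upper M A" for z
  proof -
    have "z \<in> carrier M"
      using z unfolding Upper_def by blast
    moreover have "f z \<in> Upper L (f ` A)"
      using z A le fM \<open>z \<in> carrier M\<close> by (auto simp: Upper_def)
    ultimately show ?thesis
      using least_le[OF t] s le by auto
  qed
  ultimately show ?thesis
    by (auto simp: least_def)
qed

lemma lattice_poset_iso:
  fixes M :: "('a, 'c) gorder_scheme" and L :: "('b, 'd) gorder_scheme"
  assumes iso: "poset_iso M L" and "lattice L" and eq: "eq M = (=)"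
  shows "lattice M"
proof -
  interpret L: lattice L by fact
  obtain f where f: "bij_betw f (carrier M) (carrier L)"
    and le: "\<forall>x\<in>carrier M. \<forall>y\<in>carrier M. x \<sqsubseteq>\<^bsub>M\<^esub> y \<longleftrightarrow> f x \<sqsubseteq>\<^bsub>L\<^esub> f y"
    using iso unfolding poset_iso_def by blast
  have fM: "f z \<in> carrier L" if "z \<in> carrier M" for z
    using f that by (auto simp: bij_betw_def)
  have "partial_order M"
  proof
    show "x .=\<^bsub>M\<^esub> y"
      if "x \<sqsubseteq>\<^bsub>M\<^esub> y" "y \<sqsubseteq>\<^bsub>M\<^esub> x" "x \<in> carrier M" "y \<in> carrier M" for x y
    proof -
      have "f x = f y"
        using that le fM L.le_antisym by blast
      then show ?thesis
        using f that eq by (auto simp: bij_betw_def dest: inj_onD)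
    qed
    show "x \<sqsubseteq>\<^bsub>M\<^esub> y \<Longrightarrow> y \<sqsubseteq>\<^bsub>M\<^esub> z \<Longrightarrow> x \<in> carrier M \<Longrightarrow> y \<in> carrier M \<Longrightarrow> z \<in> carrier M
        \<Longrightarrow> x \<sqsubseteq>\<^bsub>M\<^esub> z" for x y z
      using le fM L.le_trans by meson
  qed (use le fM eq in auto)
  moreover have "\<exists>s. least M s (Upper M {x, y})" "\<exists>s. greatest M s (Lower M {x, y})"
    if xy: "x \<in> carrier M" "y \<in> carrier M" for x y
  proof -
    obtain t where "least L t (Upper L (f ` {x, y}))"
      using L.sup_of_two_exists[OF fM fM] xy by auto
    then show "\<exists>s. least M s (Upper M {x, y})"
      using least_Upper_order_iso[OF f le] xy by blast
    obtain t where "greatest L t (Lower L (f ` {x, y}))"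
      using L.inf_of_two_exists[OF fM fM] xy by auto
    then have "greatest M (inv_into (carrier M) f t) (Lower M {x, y})"
      using least_Upper_order_iso[of f "inv_gorder M" "inv_gorder L" "{x, y}"] f le xy by auto
    then show "\<exists>s. greatest M s (Lower M {x, y})" ..
  qed
  ultimately show ?thesis
    by (simp add: lattice_def upper_semilattice_def lower_semilattice_def
        upper_semilattice_axioms_def lower_semilattice_axioms_def)
qed

lemma (in group) ord_pow_eq_imp_pow_eq_int_pow:
  assumes g: "g \<in> carrier G" and N: "ord g \<noteq> 0" and eq: "ord (g [^] a) = ord (g [^] b)"
  shows "\<exists>k::int. g [^] (a::nat) = (g [^] (b::nat)) [^] k"
proof -
  define N where "N = ord g"
  have ord_pow: "ord (g [^] k) = N div gcd N k" for k :: nat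
    using ord_pow_gen[OF g, of k] N by (simp add: N_def)
  have "gcd N a = gcd N b" \<comment> \<open>a divisor d of N is recovered as N div (N div d)\<close>
    using eq N unfolding ord_pow N_def
    by (metis dvd_div_eq_0_iff dvd_mult_div_cancel gcd_dvd1 nonzero_mult_div_cancel_right)
  then have "int (gcd N b) dvd int a"
    by (metis gcd_dvd2 of_nat_dvd_iff)
  then obtain c where c: "int a = int (gcd N b) * c" by blast
  obtain u v where uv: "u * int b + v * int N = int (gcd N b)"
    using bezout_int[of "int b" "int N"] by (auto simp: gcd.commute)
  have "int N dvd int b * (u * c) - int a"
  proof
    show "int b * (u * c) - int a = int N * (- v * c)"
      using c by (simp add: algebra_simps flip: uv)
  qed
  then have "g [^] int a = g [^] (int b * (u * c))"
    using int_pow_eq[OF g] by (simp add: N_def)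
  then show ?thesis
    using g by (metis int_pow_int int_pow_pow)
qed

lemma (in group) cyclic_group_ord_eq_imp_int_pow:
  assumes cyc: "cyclic_group G" and fin: "finite (carrier G)"
    and x: "x \<in> carrier G" and y: "y \<in> carrier G" and eq: "ord x = ord y"
  shows "\<exists>k::int. x = y [^] k"
proof -
  obtain g where g: "g \<in> carrier G" "subgroup_generated G {g} = G"
    using cyc unfolding cyclic_group_def by blast
  then have "carrier G = generate G {g}"
    by (metis Int_absorb1 carrier_subgroup_generated empty_subsetI insert_subset)
  also have "\<dots> = range (\<lambda>k::nat. g [^] k)"
    using generate_pow_on_finite_carrier[OF fin g(1)] by auto
  finally obtain a b :: nat where "x = g [^] a" "y = g [^] b"
    using x y by blast
  moreover have "ord g \<noteq> 0"
    using ord_ge_1[OF fin g(1)] by simp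
  ultimately show ?thesis
    using ord_pow_eq_imp_pow_eq_int_pow[OF g(1)] eq by blast
qed

lemma (in group) cyclic_group_pi_e_subset_iff:
  assumes "cyclic_group G" "finite (carrier G)" and H: "subgroup H G" and K: "subgroup K G"
  shows "pi_e G H \<subseteq> pi_e G K \<longleftrightarrow> H \<subseteq> K"
proof
  assume sub: "pi_e G H \<subseteq> pi_e G K"
  show "H \<subseteq> K"
  proof
    fix x assume "x \<in> H"
    then obtain y where "y \<in> K" "ord y = ord x"
      using sub by (auto simp: pi_e_def)
    moreover have "x \<in> carrier G" "y \<in> carrier G"
      using \<open>x \<in> H\<close> \<open>y \<in> K\<close> H K subgroup.subset by blast+
    ultimately obtain k :: int where "x = y [^] k"
      using cyclic_group_ord_eq_imp_int_pow assms(1,2) by metis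
    then show "x \<in> K"
      using subgroup_int_pow_closed[OF K \<open>y \<in> K\<close>] by simp
  qed
qed (auto simp: pi_e_def)

lemma (in group) cyclic_group_spec_class:
  assumes "cyclic_group G" "finite (carrier G)" and "subgroup H G"
  shows "spec_class G H = {H}"
  using cyclic_group_pi_e_subset_iff[OF assms(1,2)] assms(3)
  by (auto simp: spec_class_def)

lemma (in group) cyclic_group_poset_iso_Pi_tilde:
  assumes "cyclic_group G" "finite (carrier G)"
  shows "poset_iso (Pi_tilde G) (subgroup_lattice G)"
proof -
  have carrier: "carrier (Pi_tilde G) = (\<lambda>H. {H}) ` {H. subgroup H G}"
    using cyclic_group_spec_class[OF assms] by (auto simp: Pi_tilde_def)
  have "{H} \<sqsubseteq>\<^bsub>Pi_tilde G\<^esub> {K} \<longleftrightarrow> H \<subseteq> K" if H: "subgroup H G" and K: "subgroup K G" for H K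
  proof -
    have "{H} \<sqsubseteq>\<^bsub>Pi_tilde G\<^esub> {K} \<longleftrightarrow> pi_e G H \<subseteq> pi_e G K"
      using H K cyclic_group_spec_class[OF assms] by (auto simp: Pi_tilde_def) metis
    also have "\<dots> \<longleftrightarrow> H \<subseteq> K"
      using cyclic_group_pi_e_subset_iff[OF assms H K] .
    finally show ?thesis .
  qed
  then have "bij_betw Union (carrier (Pi_tilde G)) (carrier (subgroup_lattice G))
      \<and> (\<forall>A\<in>carrier (Pi_tilde G). \<forall>B\<in>carrier (Pi_tilde G).
          A \<sqsubseteq>\<^bsub>Pi_tilde G\<^esub> B \<longleftrightarrow> \<Union>A \<sqsubseteq>\<^bsub>subgroup_lattice G\<^esub> \<Union>B)"
    unfolding carrier by (auto simp: bij_betw_def inj_on_def subgroup_lattice_def image_iff)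
  then show ?thesis
    unfolding poset_iso_def by blast
qed

lemma (in group) lattice_subgroup_lattice: "lattice (subgroup_lattice G)"
  unfolding subgroup_lattice_def
  using subgroups_complete_lattice by simp

lemma cyclic_integer_mod_group: "cyclic_group (integer_mod_group n)"
proof -
  let ?Z = "integer_mod_group n" and ?g = "1 mod int n"
  interpret group ?Z by simp
  have g: "?g \<in> carrier ?Z"
    by (simp add: carrier_integer_mod_group)
  have "x = ?g [^]\<^bsub>?Z\<^esub> x" if "x \<in> carrier ?Z" for x
    using that by (simp add: int_pow_integer_mod_group mod_mult_right_eq carrier_integer_mod_group
        split: if_splits)
  then have "carrier ?Z = range (\<lambda>k::int. ?g [^]\<^bsub>?Z\<^esub> k)"
    using g by blast
  then show ?thesis
    unfolding cyclic_group using g by blast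
qed

theorem theorem2p3:
  fixes n :: nat
  assumes "n > 0"
  shows "poset_iso (Pi_tilde (integer_mod_group n)) (subgroup_lattice (integer_mod_group n))
         \<and> lattice (Pi_tilde (integer_mod_group n))"
proof -
  interpret group "integer_mod_group n" by simp
  have "finite (carrier (integer_mod_group n))"
    using assms by (simp add: carrier_integer_mod_group)
  then have iso: "poset_iso (Pi_tilde (integer_mod_group n)) (subgroup_lattice (integer_mod_group n))"
    using cyclic_group_poset_iso_Pi_tilde cyclic_integer_mod_group by blast
  moreover have "lattice (Pi_tilde (integer_mod_group n))"
    using lattice_poset_iso[OF iso lattice_subgroup_lattice] by (simp add: Pi_tilde_def)
  ultimately show ?thesis ..
qed

end
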